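(* Let $k>1$ be real, let $X=1/(k-1)$, and let $E$ be any execution of Algorithm B (described in the context) by $n$ processes. For $i\ge0$, let $V_i$ be the set of Increment operations in $E$ such that the executing process's local variable $\mathit{index}$ equals $i$ at the beginning of the operation. Then $|V_i|<n(X+1)$ for every $i\ge0$.
   Context: Shared objects are treated as atomic. An exact counter supports Increment and Read; a Read returns the number of preceding Increments. A max-register supports MaxWrite$(v)$ and MaxRead; a MaxRead returns the largest value among all preceding MaxWrites, or the initial value if there was none. Algorithm B uses: - $X=1/(k-1)$; - a shared array $\mathit{Bucket}[0..\lceil m/(Xn)\rceil-1]$ of exact counters, each initially $0$; - a shared max-register $\mathit{logNumIncrems}$ with initial value $-1$; - for each process, a local variable $\mathit{index}$, initially $0$. Increment(): - $\mathit{Bucket}[\mathit{index}]$.Increment(). - $val\gets\mathit{Bucket}[\mathit{index}]$.Read(). - If $val<Xn$, then $\mathit{logNumIncrems}$.MaxWrite$(\lfloor\log_k(val+\mathit{index}\cdot Xn)\rfloor)$. - Otherwise: - $\mathit{index}\gets\mathit{index}+1$; - $\mathit{logNumIncrems}$.MaxWrite$(\lfloor\log_k(\mathit{index}\cdot Xn)\rfloor)$. Read(): - $r\gets\mathit{logNumIncrems}$.MaxRead(). - If $r\ge0$, return $k^{r+1}$; otherwise return $0$. *)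

theory Defs
  imports Complex_Main
begin

text \<open>An execution is a finite sequence of events: invocation of an Increment or a Read
  by an idle process, or one atomic shared-memory step of a process that has a
  pending operation. Local computation is merged into the preceding atomic step.\<close>

datatype pc = Idle | Inc1 | Inc2 | Inc3 | Rd1

record lstate =
  pc :: pc
  idx :: nat
  wval :: int       \<comment> \<open>value to be MaxWritten in the last step of Increment\<close>
  ret :: real

record gstate =
  bucket :: "nat \<Rightarrow> nat"
  lni :: int               \<comment> \<open>max-register logNumIncrems\<close>
  loc :: "nat \<Rightarrow> lstate"

datatype event = InvInc nat | InvRead nat | Step nat

definition algX :: "real \<Rightarrow> real" where
  "algX k = 1 / (k - 1)"

definition bsize :: "real \<Rightarrow> nat \<Rightarrow> nat \<Rightarrow> nat" where
  "bsize k n m = nat \<lceil>real m / (algX k * real n)\<rceil>"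

definition init_state :: gstate where
  "init_state = \<lparr> bucket = (\<lambda>_. 0), lni = -1,
     loc = (\<lambda>_. \<lparr> pc = Idle, idx = 0, wval = 0, ret = 0 \<rparr>) \<rparr>"

definition step :: "real \<Rightarrow> nat \<Rightarrow> nat \<Rightarrow> gstate \<Rightarrow> event \<Rightarrow> gstate option" where
  "step k n m s e = (case e of
     InvInc p \<Rightarrow> if p < n \<and> pc (loc s p) = Idle
        then Some (s\<lparr>loc := (loc s)(p := (loc s p)\<lparr>pc := Inc1\<rparr>)\<rparr>) else None
   | InvRead p \<Rightarrow> if p < n \<and> pc (loc s p) = Idle
        then Some (s\<lparr>loc := (loc s)(p := (loc s p)\<lparr>pc := Rd1\<rparr>)\<rparr>) else None
   | Step p \<Rightarrow> if \<not> p < n then None else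
       (let l = loc s p; i = idx l; Xn = algX k * real n in
        case pc l of
          Idle \<Rightarrow> None
        | Inc1 \<Rightarrow> if i < bsize k n m then
              Some (s\<lparr>bucket := (bucket s)(i := bucket s i + 1),
                      loc := (loc s)(p := l\<lparr>pc := Inc2\<rparr>)\<rparr>)
            else None
        | Inc2 \<Rightarrow> if i < bsize k n m then
              (let v = bucket s i in
               if real v < Xn then
                 Some (s\<lparr>loc := (loc s)(p := l\<lparr>pc := Inc3,
                        wval := \<lfloor>log k (real v + real i * Xn)\<rfloor>\<rparr>)\<rparr>)
               else
                 Some (s\<lparr>loc := (loc s)(p := l\<lparr>pc := Inc3, idx := i + 1,
                        wval := \<lfloor>log k (real (i + 1) * Xn)\<rfloor>\<rparr>)\<rparr>))
            else None
        | Inc3 \<Rightarrow> Some (s\<lparr>lni := max (lni s) (wval l),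
                            loc := (loc s)(p := l\<lparr>pc := Idle\<rparr>)\<rparr>)
        | Rd1 \<Rightarrow> (let r = lni s in
              Some (s\<lparr>loc := (loc s)(p := l\<lparr>pc := Idle,
                      ret := (if r \<ge> 0 then k powr (real_of_int (r + 1)) else 0)\<rparr>)\<rparr>))))"

fun run :: "real \<Rightarrow> nat \<Rightarrow> nat \<Rightarrow> gstate \<Rightarrow> event list \<Rightarrow> gstate option" where
  "run k n m s [] = Some s"
| "run k n m s (e # es) = (case step k n m s e of None \<Rightarrow> None | Some s' \<Rightarrow> run k n m s' es)"

definition is_execution :: "real \<Rightarrow> nat \<Rightarrow> nat \<Rightarrow> event list \<Rightarrow> bool" where
  "is_execution k n m es \<longleftrightarrow> run k n m init_state es \<noteq> None"

text \<open>V i: the Increment operations (identified by the position of their invocation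
  event) whose process has index = i at the beginning of the operation.\<close>
definition V :: "real \<Rightarrow> nat \<Rightarrow> nat \<Rightarrow> event list \<Rightarrow> nat \<Rightarrow> nat set" where
  "V k n m es i = {j. j < length es \<and> (\<exists>p. es ! j = InvInc p \<and>
      idx (loc (the (run k n m init_state (take j es))) p) = i)}"

end

theory Submission
  imports Defs
begin

text \<open>Fix a bucket \<open>i\<close>. Every Increment counted in \<open>V i\<close> has either already incremented
  \<open>Bucket[i]\<close> or is pending (invoked but not yet incremented), so
  \<open>|V i| = Bucket[i] + #pending\<close>. Call a process unchecked if it has incremented \<open>Bucket[i]\<close>
  and has not since read a value below \<open>Xn\<close> from it. Then \<open>Bucket[i] < Xn + #unchecked\<close> is
  invariant: each increment of \<open>Bucket[i]\<close> creates an unchecked process, and a process stops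
  being unchecked only by reading \<open>Bucket[i] < Xn\<close>. No process is both pending and
  unchecked, hence \<open>|V i| < Xn + n\<close>.\<close>

lemma run_append_single:
  "run k n m s (es @ [e]) = (case run k n m s es of None \<Rightarrow> None | Some s' \<Rightarrow> step k n m s' e)"
  by (induction es arbitrary: s) (auto split: option.splits)

lemma V_append_single:
  "V k n m (es @ [e]) i = V k n m es i \<union>
     (if \<exists>p. e = InvInc p \<and> idx (loc (the (run k n m init_state es)) p) = i
      then {length es} else {})"
  unfolding V_def by (auto simp: nth_append less_Suc_eq)

definition pending_increment :: "nat \<Rightarrow> lstate \<Rightarrow> bool" where
  "pending_increment i l \<longleftrightarrow> idx l = i \<and> pc l = Inc1"

text \<open>A process with \<open>idx > i\<close> got there by reading a value \<open>\<ge> Xn\<close> from \<open>Bucket[i]\<close>.\<close>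
definition unchecked_increment :: "nat \<Rightarrow> lstate \<Rightarrow> bool" where
  "unchecked_increment i l \<longleftrightarrow> i < idx l \<or> idx l = i \<and> pc l = Inc2"

definition num_procs :: "nat \<Rightarrow> (lstate \<Rightarrow> bool) \<Rightarrow> gstate \<Rightarrow> nat" where
  "num_procs n P s = card {p. p < n \<and> P (loc s p)}"

lemma num_procs_fun_upd:
  assumes "p < n" and "loc s' = (loc s)(p := l')"
  shows "num_procs n P s' + of_bool (P (loc s p)) = num_procs n P s + of_bool (P l')"
proof -
  define A where "A = {q. q < n \<and> P (loc s q)} - {p}"
  have card_A_plus: "card (A \<union> (if b then {p} else {})) = card A + of_bool b" for b
  proof -
    have "finite A" and "p \<notin> A" by (auto simp: A_def)
    then show ?thesis by (cases b) simp_all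
  qed
  have split_sets: "{q. q < n \<and> P (loc s' q)} = A \<union> (if P l' then {p} else {})"
       "{q. q < n \<and> P (loc s q)} = A \<union> (if P (loc s p) then {p} else {})"
    using assms by (auto simp: A_def)
  show ?thesis
    unfolding num_procs_def split_sets card_A_plus by simp
qed

lemma num_procs_disjoint_le:
  assumes "\<And>l. P l \<Longrightarrow> Q l \<Longrightarrow> False"
  shows "num_procs n P s + num_procs n Q s \<le> n"
proof -
  have "num_procs n P s + num_procs n Q s = card ({p. p < n \<and> P (loc s p)} \<union> {p. p < n \<and> Q (loc s p)})"
    unfolding num_procs_def using assms by (intro card_Un_disjoint[symmetric]) auto
  also have "\<dots> \<le> card {..<n}"
    by (intro card_mono) auto
  finally show ?thesis by simp
qed

lemma step_updates_own_process:
  assumes "step k n m s e = Some s'" and "e = InvInc p \<or> e = InvRead p \<or> e = Step p"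
  shows "p < n" and "loc s' = (loc s)(p := loc s' p)"
  using assms by (auto simp: step_def Let_def split: pc.splits if_splits)

lemma step_pending_balance:
  assumes "step k n m s e = Some s'" and "e = InvInc p \<or> e = InvRead p \<or> e = Step p"
  shows "bucket s i + of_bool (e = InvInc p \<and> idx (loc s p) = i) + of_bool (pending_increment i (loc s p))
       = bucket s' i + of_bool (pending_increment i (loc s' p))"
  using assms by (auto simp: step_def Let_def pending_increment_def split: pc.splits if_splits)

lemma step_unchecked_bound:
  assumes "step k n m s e = Some s'" and "e = InvInc p \<or> e = InvRead p \<or> e = Step p"
  shows "bucket s' i + of_bool (unchecked_increment i (loc s p))
           \<le> bucket s i + of_bool (unchecked_increment i (loc s' p))
         \<or> real (bucket s' i) < algX k * real n"
  using assms by (auto simp: step_def Let_def unchecked_increment_def split: pc.splits if_splits)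

lemma bucket_invariant:
  assumes "0 < algX k * real n" and "run k n m init_state es = Some s"
  shows "card (V k n m es i) = bucket s i + num_procs n (pending_increment i) s
       \<and> real (bucket s i) < algX k * real n + real (num_procs n (unchecked_increment i) s)"
  using assms(2)
proof (induction es arbitrary: s rule: rev_induct)
  case Nil
  then have "s = init_state" by simp
  then show ?case
    using assms(1) by (simp add: V_def init_state_def num_procs_def pending_increment_def)
next
  case (snoc e es)
  obtain s0 where run: "run k n m init_state es = Some s0" and step: "step k n m s0 e = Some s"
    using snoc.prems by (auto simp: run_append_single split: option.splits)
  obtain p where proc: "e = InvInc p \<or> e = InvRead p \<or> e = Step p"
    by (cases e) auto
  have "finite (V k n m es i)" and "length es \<notin> V k n m es i"
    by (auto simp: V_def)
  then have card_V: "card (V k n m (es @ [e]) i) = card (V k n m es i) + of_bool (e = InvInc p \<and> idx (loc s0 p) = i)"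
    using proc by (auto simp: V_append_single run)
  have procs_upd: "num_procs n P s + of_bool (P (loc s0 p)) = num_procs n P s0 + of_bool (P (loc s p))" for P
    using step_updates_own_process[OF step proc] by (intro num_procs_fun_upd) auto
  have "card (V k n m (es @ [e]) i) = bucket s i + num_procs n (pending_increment i) s"
    using card_V snoc.IH[OF run] step_pending_balance[OF step proc, of i] procs_upd[of "pending_increment i"]
    by linarith
  moreover have "real (bucket s i) < algX k * real n + real (num_procs n (unchecked_increment i) s)"
    using step_unchecked_bound[OF step proc, of i]
  proof
    assume "bucket s i + of_bool (unchecked_increment i (loc s0 p))
              \<le> bucket s0 i + of_bool (unchecked_increment i (loc s p))"
    then show ?thesis
      using snoc.IH[OF run] procs_upd[of "unchecked_increment i"] by linarith
  qed simp
  ultimately show ?case ..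
qed

theorem lemma12:
  fixes k :: real and n m :: nat and es :: "event list" and i :: nat
  assumes "k > 1" and "n \<ge> 1" and "is_execution k n m es"
  shows "real (card (V k n m es i)) < real n * (algX k + 1)"
proof -
  obtain s where run: "run k n m init_state es = Some s"
    using assms(3) by (auto simp: is_execution_def)
  have "0 < algX k * real n"
    using assms(1,2) by (simp add: algX_def)
  note invariant = bucket_invariant[OF this run, of i]
  have "num_procs n (pending_increment i) s + num_procs n (unchecked_increment i) s \<le> n"
    by (rule num_procs_disjoint_le) (auto simp: pending_increment_def unchecked_increment_def)
  then show ?thesis
    using invariant by (simp add: algebra_simps)
qed

end
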